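(* For every message $M$ and formulas $\phi,\psi$: $\vdash(\langle M\rangle\phi\to[M]\psi)\to[M](\phi\to\psi)$.
   Context: Fix a finite set $\mathcal{A}$ of agent names containing a distinguished name $\mathsf{CM}$. Messages: $M ::= a \mid B \mid (M,M)$ ($a\in\mathcal{A}$, $B$ optional data constants, pairs). $\mathcal{P}$ is a denumerable set of propositional variables containing atoms $\mathsf{k}_a(M)$ ("$a$ knows $M$"). Formulas: $\phi ::= P \mid \phi\wedge\phi \mid \phi\vee\phi \mid \neg\phi \mid \phi\to\phi \mid [M]\phi$. Abbreviations: $\mathrm{true}:=\mathsf{k}_{\mathsf{CM}}(\mathsf{CM})$, $\mathrm{false}:=\neg\mathrm{true}$, $\phi\leftrightarrow\psi:=(\phi\to\psi)\wedge(\psi\to\phi)$, $\langle M\rangle\phi:=\neg\neg(\mathsf{k}_{\mathsf{CM}}(M)\wedge\phi)$. LIiP is the smallest set of formulas containing all instances of: the axioms of an adequate Hilbert axiomatization of intuitionistic propositional logic; $\mathsf{k}_a(a)$; $(\mathsf{k}_a(M)\wedge\mathsf{k}_a(M'))\leftrightarrow\mathsf{k}_a((M,M'))$; $[M]\mathsf{k}_{\mathsf{CM}}(M)$; $[M](\phi\to\psi)\to([M]\phi\to[M]\psi)$; $[M]\phi\to(\mathsf{k}_{\mathsf{CM}}(M)\to\phi)$; $[M]\phi\to\langle M\rangle\phi$; $\phi\to[M]\phi$; and closed under modus ponens and the rule: if $\mathsf{k}_{\mathsf{CM}}(M)\to\mathsf{k}_{\mathsf{CM}}(M')$ is in the set then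 so is $[M']\phi\to[M]\phi$ for every $\phi$. Write $\vdash\phi$ for $\phi\in\mathrm{LIiP}$. *)

theory Defs
  imports Main
begin

datatype ('ag, 'd) msg = Ag 'ag | Dat 'd | MPair "('ag, 'd) msg" "('ag, 'd) msg"

text \<open>Formulas. Propositional variables are either knowledge atoms k_a(M)
  or further (other) propositional variables of type 'p.\<close>
datatype ('ag, 'd, 'p) fm =
    PVar 'p
  | K 'ag "('ag, 'd) msg"
  | Conj "('ag, 'd, 'p) fm" "('ag, 'd, 'p) fm"
  | Disj "('ag, 'd, 'p) fm" "('ag, 'd, 'p) fm"
  | Neg "('ag, 'd, 'p) fm"
  | Imp "('ag, 'd, 'p) fm" "('ag, 'd, 'p) fm"
  | Box "('ag, 'd) msg" "('ag, 'd, 'p) fm"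

definition TT :: "'ag \<Rightarrow> ('ag, 'd, 'p) fm" where
  "TT cm = K cm (Ag cm)"

definition FF :: "'ag \<Rightarrow> ('ag, 'd, 'p) fm" where
  "FF cm = Neg (TT cm)"

definition Iff :: "('ag, 'd, 'p) fm \<Rightarrow> ('ag, 'd, 'p) fm \<Rightarrow> ('ag, 'd, 'p) fm" where
  "Iff a b = Conj (Imp a b) (Imp b a)"

definition Dia :: "'ag \<Rightarrow> ('ag, 'd) msg \<Rightarrow> ('ag, 'd, 'p) fm \<Rightarrow> ('ag, 'd, 'p) fm" where
  "Dia cm M a = Neg (Neg (Conj (K cm M) a))"

text \<open>LIiP, parametrised by the distinguished agent cm (CM).
  Intuitionistic propositional part: a standard adequate Hilbert system
  with primitive negation.\<close>
inductive LIiP :: "'ag \<Rightarrow> ('ag, 'd, 'p) fm \<Rightarrow> bool" for cm :: 'ag where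
  ax_K: "LIiP cm (Imp a (Imp b a))"
| ax_S: "LIiP cm (Imp (Imp a (Imp b c)) (Imp (Imp a b) (Imp a c)))"
| ax_conjI: "LIiP cm (Imp a (Imp b (Conj a b)))"
| ax_conjE1: "LIiP cm (Imp (Conj a b) a)"
| ax_conjE2: "LIiP cm (Imp (Conj a b) b)"
| ax_disjI1: "LIiP cm (Imp a (Disj a b))"
| ax_disjI2: "LIiP cm (Imp b (Disj a b))"
| ax_disjE: "LIiP cm (Imp (Imp a c) (Imp (Imp b c) (Imp (Disj a b) c)))"
| ax_negI: "LIiP cm (Imp (Imp a b) (Imp (Imp a (Neg b)) (Neg a)))"
| ax_negE: "LIiP cm (Imp (Neg a) (Imp a b))"
| ax_know_self: "LIiP cm (K ag (Ag ag))"
| ax_know_pair: "LIiP cm (Iff (Conj (K ag M) (K ag M')) (K ag (MPair M M')))"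
| ax_box_know: "LIiP cm (Box M (K cm M))"
| ax_box_K: "LIiP cm (Imp (Box M (Imp a b)) (Imp (Box M a) (Box M b)))"
| ax_box_T: "LIiP cm (Imp (Box M a) (Imp (K cm M) a))"
| ax_box_dia: "LIiP cm (Imp (Box M a) (Dia cm M a))"
| ax_box_intro: "LIiP cm (Imp a (Box M a))"
| mp: "LIiP cm (Imp a b) \<Longrightarrow> LIiP cm a \<Longrightarrow> LIiP cm b"
| mono: "LIiP cm (Imp (K cm M) (K cm M')) \<Longrightarrow> LIiP cm (Imp (Box M' a) (Box M a))"

end

theory Submission
  imports Defs
begin

text \<open>From the hypotheses \<open>k\<^sub>C\<^sub>M(M)\<close>, \<open>\<langle>M\<rangle>\<phi> \<rightarrow> [M]\<psi>\<close> and \<open>\<phi>\<close> one derives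
  \<open>\<langle>M\<rangle>\<phi>\<close> (double negation of \<open>k\<^sub>C\<^sub>M(M) \<and> \<phi>\<close>), hence \<open>[M]\<psi>\<close>, hence \<open>\<psi>\<close> by the
  axiom \<open>[M]\<psi> \<rightarrow> (k\<^sub>C\<^sub>M(M) \<rightarrow> \<psi>)\<close>. The deduction theorem discharges these hypotheses,
  and an implication that holds under \<open>k\<^sub>C\<^sub>M(M)\<close> can be moved under \<open>[M]\<close>, since
  \<open>[M]k\<^sub>C\<^sub>M(M)\<close> is an axiom and every formula implies its own \<open>[M]\<close>-box.\<close>

inductive derives :: "'ag \<Rightarrow> ('ag, 'd, 'p) fm set \<Rightarrow> ('ag, 'd, 'p) fm \<Rightarrow> bool" for cm where
  derives_hyp: "a \<in> \<Gamma> \<Longrightarrow> derives cm \<Gamma> a"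
| derives_thm: "LIiP cm a \<Longrightarrow> derives cm \<Gamma> a"
| derives_mp: "derives cm \<Gamma> (Imp a b) \<Longrightarrow> derives cm \<Gamma> a \<Longrightarrow> derives cm \<Gamma> b"

lemma LIiP_imp_refl: "LIiP cm (Imp a a)"
proof -
  have "LIiP cm (Imp (Imp a (Imp (Imp a a) a)) (Imp (Imp a (Imp a a)) (Imp a a)))"
    by (rule LIiP.ax_S)
  then have "LIiP cm (Imp (Imp a (Imp a a)) (Imp a a))"
    using LIiP.ax_K by (rule LIiP.mp)
  then show ?thesis
    using LIiP.ax_K by (rule LIiP.mp)
qed

lemma derives_mp_thm: "LIiP cm (Imp a b) \<Longrightarrow> derives cm \<Gamma> a \<Longrightarrow> derives cm \<Gamma> b"
  by (rule derives_mp[OF derives_thm])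

lemma derives_weaken_imp: "derives cm \<Gamma> a \<Longrightarrow> derives cm \<Gamma> (Imp h a)"
  by (rule derives_mp_thm[OF LIiP.ax_K])

lemma deduction_theorem:
  assumes "derives cm (insert h \<Gamma>) a"
  shows "derives cm \<Gamma> (Imp h a)"
  using assms
proof (induction "insert h \<Gamma>" a rule: derives.induct)
  case (derives_hyp a)
  then consider "a = h" | "a \<in> \<Gamma>" by blast
  then show ?case
  proof cases
    case 1
    then show ?thesis by (simp add: derives.derives_thm[OF LIiP_imp_refl])
  next
    case 2
    then show ?thesis by (intro derives_weaken_imp derives.derives_hyp)
  qed
next
  case (derives_thm a)
  then show ?case by (intro derives_weaken_imp derives.derives_thm)
next
  case (derives_mp a b)
  have "derives cm \<Gamma> (Imp (Imp h a) (Imp h b))"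
    using LIiP.ax_S derives_mp.hyps(2) by (rule derives_mp_thm)
  then show ?case
    using derives_mp.hyps(4) by (rule derives.derives_mp)
qed

lemma derives_empty_imp_LIiP:
  fixes a :: "('ag, 'd, 'p) fm"
  shows "derives cm {} a \<Longrightarrow> LIiP cm a"
proof (induction "{} :: ('ag, 'd, 'p) fm set" a rule: derives.induct)
  case (derives_mp a b)
  then show ?case by (blast intro: LIiP.mp)
qed simp_all

lemma derives_not_not_intro:
  assumes "derives cm \<Gamma> a"
  shows "derives cm \<Gamma> (Neg (Neg a))"
proof -
  have "derives cm \<Gamma> (Imp (Neg a) a)"
    using assms by (rule derives_weaken_imp)
  then have "derives cm \<Gamma> (Imp (Imp (Neg a) (Neg a)) (Neg (Neg a)))"
    by (rule derives_mp_thm[OF LIiP.ax_negI])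
  then show ?thesis
    using derives_thm[OF LIiP_imp_refl] by (rule derives_mp)
qed

lemma derives_DiaI:
  assumes "derives cm \<Gamma> (K cm M)" and "derives cm \<Gamma> a"
  shows "derives cm \<Gamma> (Dia cm M a)"
  unfolding Dia_def
  using derives_mp[OF derives_mp_thm[OF LIiP.ax_conjI assms(1)] assms(2)]
  by (rule derives_not_not_intro)

lemma derives_BoxE:
  assumes "derives cm \<Gamma> (Box M a)" and "derives cm \<Gamma> (K cm M)"
  shows "derives cm \<Gamma> a"
  using derives_mp_thm[OF LIiP.ax_box_T assms(1)] assms(2) by (rule derives_mp)

lemma LIiP_imp_trans:
  assumes "LIiP cm (Imp a b)" and "LIiP cm (Imp b c)"
  shows "LIiP cm (Imp a c)"
proof -
  have "derives cm {a} c"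
    using assms by (meson derives_mp_thm derives_hyp singletonI)
  then show ?thesis
    by (intro derives_empty_imp_LIiP deduction_theorem)
qed

lemma LIiP_BoxI: "LIiP cm a \<Longrightarrow> LIiP cm (Box M a)"
  by (rule LIiP.mp[OF LIiP.ax_box_intro])

lemma LIiP_Box_mp: "LIiP cm (Box M (Imp a b)) \<Longrightarrow> LIiP cm (Imp (Box M a) (Box M b))"
  by (rule LIiP.mp[OF LIiP.ax_box_K])

lemma LIiP_imp_Box_if_knows:
  assumes "LIiP cm (Imp (K cm M) (Imp a b))"
  shows "LIiP cm (Imp a (Box M b))"
proof -
  have "LIiP cm (Box M (Imp a b))"
    using LIiP_Box_mp[OF LIiP_BoxI[OF assms]] LIiP.ax_box_know by (rule LIiP.mp)
  then have "LIiP cm (Imp (Box M a) (Box M b))"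
    by (rule LIiP_Box_mp)
  then show ?thesis
    by (rule LIiP_imp_trans[OF LIiP.ax_box_intro])
qed

theorem theorem2p46:
  fixes cm :: "'ag::finite" and M :: "('ag, 'd) msg" and \<phi> \<psi> :: "('ag, 'd, 'p) fm"
  shows "LIiP cm (Imp (Imp (Dia cm M \<phi>) (Box M \<psi>)) (Box M (Imp \<phi> \<psi>)))"
proof (rule LIiP_imp_Box_if_knows)
  let ?\<Gamma> = "{\<phi>, Imp (Dia cm M \<phi>) (Box M \<psi>), K cm M}"
  have knows: "derives cm ?\<Gamma> (K cm M)" and phi: "derives cm ?\<Gamma> \<phi>"
    and hyp: "derives cm ?\<Gamma> (Imp (Dia cm M \<phi>) (Box M \<psi>))"
    by (simp_all add: derives_hyp)
  from knows phi have "derives cm ?\<Gamma> (Dia cm M \<phi>)"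
    by (rule derives_DiaI)
  then have "derives cm ?\<Gamma> \<psi>"
    by (rule derives_BoxE[OF derives_mp[OF hyp] knows])
  then show "LIiP cm (Imp (K cm M) (Imp (Imp (Dia cm M \<phi>) (Box M \<psi>)) (Imp \<phi> \<psi>)))"
    by (intro derives_empty_imp_LIiP deduction_theorem)
qed

end
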